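(* Let $\Omega\subseteq\mathbb{R}^d$ be a nonempty open convex set and $F:\Omega\to\mathbb{R}$ a function of Legendre type with Bregman divergence $D_F$. Let $A=\prod_{i=1}^d[a_i,b_i]\subset\mathbb{R}^d$ be an axis-aligned box of positive finite volume (i.e. $a_i<b_i$ real), with boundary $\partial A$. Let $q\in\Omega\setminus A$, let $r\ge 0$ be finite, and let $B$ be the Bregman ball (either the primal ball $\{y\in\Omega: D_F(q\|y)\le r\}$ or the dual ball $\{y\in\Omega: D_F(y\|q)\le r\}$) centered at $q$ of radius $r$. If $B\cap\partial A=\emptyset$, then $A\cap\Omega\subseteq\Omega\setminus B$.
   Context: A function $F:\Omega\to\mathbb{R}$ on a nonempty open convex set $\Omega\subseteq\mathbb{R}^d$ is of Legendre type if (I) it is differentiable, (II) it is strictly convex, and (III) if $\partial\Omega$ is nonempty, then $\|\nabla F(x)\|\to\infty$ as $x\to\partial\Omega$. The Bregman divergence generated by $F$ is $D_F(x\|y)=F(x)-F(y)-\langle\nabla F(y),x-y\rangle$ for $x,y\in\Omega$. *)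

theory Defs
  imports "HOL-Analysis.Analysis"
begin

definition strictly_convex_on :: "'a::real_vector set \<Rightarrow> ('a \<Rightarrow> real) \<Rightarrow> bool" where
  "strictly_convex_on S f \<longleftrightarrow>
     (\<forall>x\<in>S. \<forall>y\<in>S. x \<noteq> y \<longrightarrow> (\<forall>t::real. 0 < t \<and> t < 1 \<longrightarrow>
        f ((1 - t) *\<^sub>R x + t *\<^sub>R y) < (1 - t) * f x + t * f y))"

definition grad :: "('a::euclidean_space \<Rightarrow> real) \<Rightarrow> 'a \<Rightarrow> 'a" where
  "grad F y = (\<Sum>i\<in>Basis. frechet_derivative F (at y) i *\<^sub>R i)"

definition legendre_type :: "'a::euclidean_space set \<Rightarrow> ('a \<Rightarrow> real) \<Rightarrow> bool" where
  "legendre_type \<Omega> F \<longleftrightarrow>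
     (\<forall>x\<in>\<Omega>. F differentiable (at x)) \<and>
     strictly_convex_on \<Omega> F \<and>
     (frontier \<Omega> \<noteq> {} \<longrightarrow>
        (\<forall>z\<in>frontier \<Omega>. filterlim (\<lambda>x. norm (grad F x)) at_top (at z within \<Omega>)))"

definition bregman :: "('a::euclidean_space \<Rightarrow> real) \<Rightarrow> 'a \<Rightarrow> 'a \<Rightarrow> real" where
  "bregman F x y = F x - F y - inner (grad F y) (x - y)"

definition primal_ball :: "'a::euclidean_space set \<Rightarrow> ('a \<Rightarrow> real) \<Rightarrow> 'a \<Rightarrow> real \<Rightarrow> 'a set" where
  "primal_ball \<Omega> F q r = {y\<in>\<Omega>. bregman F q y \<le> r}"

definition dual_ball :: "'a::euclidean_space set \<Rightarrow> ('a \<Rightarrow> real) \<Rightarrow> 'a \<Rightarrow> real \<Rightarrow> 'a set" where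
  "dual_ball \<Omega> F q r = {y\<in>\<Omega>. bregman F y q \<le> r}"

end

theory Submission
  imports Defs
begin

text \<open>Both kinds of Bregman ball around \<open>q\<close> are star-shaped with respect to \<open>q\<close>: along
  the segment from \<open>q\<close> to a point \<open>y\<close> of the ball, \<open>D\<^sub>F(q\<parallel>\<cdot>)\<close> increases because the
  gradient of a convex function is monotone, and \<open>D\<^sub>F(\<cdot>\<parallel>q)\<close> is a convex function vanishing
  at \<open>q\<close>. If \<open>q\<close> lies outside the box and the ball met the box at \<open>y\<close>, the segment
  from \<open>q\<close> to \<open>y\<close> would cross the boundary of the box inside the ball.\<close>

lemma strictly_convex_on_imp_convex_on:
  assumes "convex S" "strictly_convex_on S f"
  shows "convex_on S f"
proof (rule convex_onI[OF _ \<open>convex S\<close>])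
  fix t :: real and x y
  assume t: "0 < t" "t < 1" and "x \<in> S" "y \<in> S"
  show "f ((1 - t) *\<^sub>R x + t *\<^sub>R y) \<le> (1 - t) * f x + t * f y"
  proof (cases "x = y")
    case True
    have "(1 - t) *\<^sub>R x + t *\<^sub>R x = x" "(1 - t) * f x + t * f x = f x"
      by (simp_all flip: scaleR_add_left distrib_right)
    with True show ?thesis
      by simp
  next
    case False
    then show ?thesis
      using assms(2) t \<open>x \<in> S\<close> \<open>y \<in> S\<close> unfolding strictly_convex_on_def
      by (simp add: less_imp_le)
  qed
qed

lemma convex_on_derivative_le:
  assumes "convex_on S f" "x \<in> S" "y \<in> S" "(f has_derivative D) (at y)"
  shows "D (x - y) \<le> f x - f y"
proof -
  define g where "g = (\<lambda>t::real. f (y + t *\<^sub>R (x - y)))"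
  have "((\<lambda>t::real. y + t *\<^sub>R (x - y)) has_derivative (\<lambda>t. t *\<^sub>R (x - y))) (at 0)"
    by (auto intro!: derivative_eq_intros)
  from has_derivative_compose[OF this, of f D]
  have "(g has_derivative (\<lambda>t. t * D (x - y))) (at 0)"
    using assms(4) has_derivative_linear[OF assms(4)] by (simp add: g_def linear_scale)
  then have "(g has_field_derivative D (x - y)) (at 0)"
    by (simp add: has_field_derivative_def mult.commute[of _ "D (x - y)"])
  then have "((\<lambda>t. (g t - g 0) / (t - 0)) \<longlongrightarrow> D (x - y)) (at_right 0)"
    unfolding has_field_derivative_iff
    by (rule tendsto_mono[rotated]) (simp add: at_le)
  moreover have "\<forall>\<^sub>F t in at_right 0. t \<in> {0::real<..<1}"
    by (rule eventually_at_right_real) simp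
  then have "\<forall>\<^sub>F t in at_right 0. (g t - g 0) / (t - 0) \<le> f x - f y"
  proof eventually_elim
    case (elim t)
    have "y + t *\<^sub>R (x - y) = (1 - t) *\<^sub>R y + t *\<^sub>R x"
      by (simp add: algebra_simps)
    then have "g t \<le> (1 - t) * f y + t * f x"
      using convex_onD[OF assms(1), of t y x] elim assms(2,3) by (simp add: g_def)
    then have "g t - g 0 \<le> t * (f x - f y)"
      by (simp add: g_def algebra_simps)
    with elim show ?case
      by (simp add: divide_le_eq mult.commute)
  qed
  ultimately show ?thesis
    by (rule tendsto_le[OF _ tendsto_const, rotated]) simp
qed

lemma inner_grad:
  assumes "F differentiable (at y)"
  shows "grad F y \<bullet> v = frechet_derivative F (at y) v"
proof -
  let ?D = "frechet_derivative F (at y)"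
  have "linear ?D"
    using assms frechet_derivative_works has_derivative_linear by blast
  have "?D v = ?D (\<Sum>i\<in>Basis. (v \<bullet> i) *\<^sub>R i)"
    by (simp add: euclidean_representation)
  also have "\<dots> = (\<Sum>i\<in>Basis. (v \<bullet> i) * ?D i)"
    using \<open>linear ?D\<close> by (simp add: linear_sum linear_scale)
  finally have "?D v = (\<Sum>i\<in>Basis. (v \<bullet> i) * ?D i)" .
  then show ?thesis
    unfolding grad_def inner_sum_left inner_scaleR_left by (simp add: inner_commute mult.commute)
qed

lemma convex_on_grad_le:
  assumes "convex_on S F" "x \<in> S" "y \<in> S" "F differentiable (at y)"
  shows "F y + grad F y \<bullet> (x - y) \<le> F x"
  using convex_on_derivative_le[OF assms(1-3) frechet_derivative_works[THEN iffD1, OF assms(4)]]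
  by (simp add: inner_grad assms(4))

lemma bregman_nonneg:
  assumes "convex_on S F" "x \<in> S" "y \<in> S" "F differentiable (at y)"
  shows "0 \<le> bregman F x y"
  using convex_on_grad_le[OF assms] by (simp add: bregman_def)

lemma bregman_left_mono_on_segment:
  assumes "convex_on S F" "\<And>x. x \<in> S \<Longrightarrow> F differentiable (at x)"
    and "q \<in> S" "y \<in> S" "z \<in> closed_segment q y"
  shows "bregman F q z \<le> bregman F q y"
proof -
  obtain t where t: "0 \<le> t" "t \<le> 1" and z: "z = (1 - t) *\<^sub>R q + t *\<^sub>R y"
    using assms(5) by (auto simp: in_segment)
  have "z \<in> S"
    using assms(1,3-5) convex_on_imp_convex closed_segment_subset by blast
  define v where "v = y - q"
  have diffs: "z - y = - ((1 - t) *\<^sub>R v)" "y - z = (1 - t) *\<^sub>R v" "q - z = - (t *\<^sub>R v)"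
      "q - y = - v"
    by (simp_all add: z v_def algebra_simps)
  show ?thesis
  proof (cases "t = 1")
    case True
    then show ?thesis by (simp add: z)
  next
    case False
    have tangent_y: "F y - (1 - t) * (grad F y \<bullet> v) \<le> F z"
      using convex_on_grad_le[OF assms(1) \<open>z \<in> S\<close> assms(4) assms(2)[OF assms(4)]]
      by (simp add: diffs)
    have "F z + (1 - t) * (grad F z \<bullet> v) \<le> F y"
      using convex_on_grad_le[OF assms(1) assms(4) \<open>z \<in> S\<close> assms(2)[OF \<open>z \<in> S\<close>]]
      by (simp add: diffs)
    with tangent_y have "(1 - t) * (grad F z \<bullet> v) \<le> (1 - t) * (grad F y \<bullet> v)"
      by linarith
    with False t have "t * (grad F z \<bullet> v) \<le> t * (grad F y \<bullet> v)"
      by (simp add: mult_left_mono)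
    moreover have "bregman F q z = F q - F z + t * (grad F z \<bullet> v)"
      by (simp add: bregman_def diffs)
    moreover have "bregman F q y = F q - F y + grad F y \<bullet> v"
      by (simp add: bregman_def diffs)
    ultimately show ?thesis
      using tangent_y by (simp add: algebra_simps)
  qed
qed

lemma bregman_right_mono_on_segment:
  assumes "convex_on S F" "F differentiable (at q)" "q \<in> S" "y \<in> S"
    and "z \<in> closed_segment q y"
  shows "bregman F z q \<le> bregman F y q"
proof -
  obtain t where t: "0 \<le> t" "t \<le> 1" and z: "z = (1 - t) *\<^sub>R q + t *\<^sub>R y"
    using assms(5) by (auto simp: in_segment)
  have "F z \<le> (1 - t) * F q + t * F y"
    using convex_onD[OF assms(1) t assms(3,4)] z by simp
  then have "bregman F z q \<le> t * bregman F y q"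
    by (simp add: bregman_def z algebra_simps)
  also have "\<dots> \<le> bregman F y q"
    using bregman_nonneg[OF assms(1,4,3,2)] t by (simp add: mult_left_le_one_le)
  finally show ?thesis .
qed

lemma closed_segment_subset_primal_ball:
  assumes "convex_on \<Omega> F" "\<And>x. x \<in> \<Omega> \<Longrightarrow> F differentiable (at x)"
    and "q \<in> \<Omega>" "y \<in> primal_ball \<Omega> F q r"
  shows "closed_segment q y \<subseteq> primal_ball \<Omega> F q r"
  using assms bregman_left_mono_on_segment[OF assms(1,2,3)]
    closed_segment_subset[OF _ _ convex_on_imp_convex[OF assms(1)]]
  unfolding primal_ball_def by fastforce

lemma closed_segment_subset_dual_ball:
  assumes "convex_on \<Omega> F" "F differentiable (at q)"
    and "q \<in> \<Omega>" "y \<in> dual_ball \<Omega> F q r"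
  shows "closed_segment q y \<subseteq> dual_ball \<Omega> F q r"
  using assms bregman_right_mono_on_segment[OF assms(1,2,3)]
    closed_segment_subset[OF _ _ convex_on_imp_convex[OF assms(1)]]
  unfolding dual_ball_def by fastforce

lemma Int_empty_if_segments_avoid_frontier:
  fixes S T :: "'a::real_normed_vector set"
  assumes "\<And>y. y \<in> S \<Longrightarrow> closed_segment q y \<subseteq> S" "q \<notin> T" "S \<inter> frontier T = {}"
  shows "S \<inter> T = {}"
proof (rule ccontr)
  assume "S \<inter> T \<noteq> {}"
  then obtain y where "y \<in> S" "y \<in> T" by blast
  then have "closed_segment q y \<inter> frontier T \<noteq> {}"
    using assms(2) by (intro connected_Int_frontier) auto
  with assms(1)[OF \<open>y \<in> S\<close>] assms(3) show False by blast
qed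

theorem lemma3:
  fixes \<Omega> :: "'a::euclidean_space set" and F :: "'a \<Rightarrow> real"
    and a b q :: 'a and r :: real and B :: "'a set"
  assumes "\<Omega> \<noteq> {}" and "open \<Omega>" and "convex \<Omega>"
    and "legendre_type \<Omega> F"
    and "\<forall>i\<in>Basis. a \<bullet> i < b \<bullet> i"
    and "q \<in> \<Omega> - cbox a b"
    and "r \<ge> 0"
    and "B = primal_ball \<Omega> F q r \<or> B = dual_ball \<Omega> F q r"
    and "B \<inter> frontier (cbox a b) = {}"
  shows "cbox a b \<inter> \<Omega> \<subseteq> \<Omega> - B"
proof -
  have convex_F: "convex_on \<Omega> F" and diff_F: "\<And>x. x \<in> \<Omega> \<Longrightarrow> F differentiable (at x)"
    using assms(3,4) strictly_convex_on_imp_convex_on unfolding legendre_type_def by auto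
  have q: "q \<in> \<Omega>" "q \<notin> cbox a b"
    using assms(6) by auto
  have "closed_segment q y \<subseteq> B" if "y \<in> B" for y
    using assms(8) closed_segment_subset_primal_ball[OF convex_F diff_F q(1)]
      closed_segment_subset_dual_ball[OF convex_F diff_F[OF q(1)] q(1)] that
    by blast
  then have "B \<inter> cbox a b = {}"
    using q(2) assms(9) by (rule Int_empty_if_segments_avoid_frontier)
  then show ?thesis
    by blast
qed

end
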